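(* Assume $f_1,f_0$ are $\ell_1$-Lipschitz with constants $L_1,L_0$. Define $$L_{UN}:=\sup_{\pi\in[0,1],\;0<\Delta\le\pi}\Big(\pi L_1+(1-\pi)L_0+|f_1(0,\pi-\Delta)-f_0(0,\pi-\Delta)|\Big).$$ If $L_{UN}<1$, then $f(\pi)=\pi f_1(0,\pi)+(1-\pi)f_0(0,\pi)$ satisfies $|f(x)-f(y)|\le L_{UN}|x-y|$ for all $x,y\in[0,1]$; consequently $f$ has a unique fixed point $\pi^{\mathfrak e}$, the unconstrained policy is equalizing in discrete time, and if $\max_{j\in\{A,B\}}|\pi_0(1|j)-\pi^{\mathfrak e}|\le d$ then $|\pi_t(1|A)-\pi_t(1|B)|\le 2dL_{UN}^t$ for all $t\ge0$.
   Context: Two groups $A,B$; at time $t$ group $j$ has qualification profile $\pi_t(1|j)\in[0,1]$, $\pi_t(0|j)=1-\pi_t(1|j)$. Selection rates $\beta_t(v;j)=\tau(v;j)\pi_t(v|j)$ for a policy $\tau(v;j)\in[0,1]$. Dynamics: continuously differentiable $f_0,f_1:[0,1]^2\to[0,1]$, and in discrete time $\pi_{t+1}(1|j)=\pi_t(1|j)f_1(\beta_t(0;j),\beta_t(1;j))+(1-\pi_t(1|j))f_0(\beta_t(0;j),\beta_t(1;j))$. Under the unconstrained policy ($\tau(1;j)=1$, $\tau(0;j)=0$) each group evolves by $\pi_{t+1}=f(\pi_t)$. "$\ell_1$-Lipschitz with constant $L_i$" means $|f_i(x_1,x_2)-f_i(y_1,y_2)|\le L_i(|x_1-y_1|+|x_2-y_2|)$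 for all $x_1,x_2,y_1,y_2\in[0,1]$. Equalizing: $|\pi_t(1|A)-\pi_t(1|B)|\to0$ for all initial profiles. *)

theory Defs
  imports "HOL-Analysis.Analysis"
begin

definition unit_square :: "(real \<times> real) set" where
  "unit_square = {0..1} \<times> {0..1}"

definition C1_on_square :: "(real \<Rightarrow> real \<Rightarrow> real) \<Rightarrow> bool" where
  "C1_on_square g \<longleftrightarrow>
     (\<exists>g1 g2 :: real \<Rightarrow> real \<Rightarrow> real.
        continuous_on unit_square (\<lambda>(x, y). g1 x y) \<and>
        continuous_on unit_square (\<lambda>(x, y). g2 x y) \<and>
        (\<forall>x y. (x, y) \<in> unit_square \<longrightarrow>
           ((\<lambda>(u, v). g u v) has_derivative (\<lambda>(h, k). g1 x y * h + g2 x y * k))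
             (at (x, y) within unit_square)))"

definition l1_lipschitz :: "real \<Rightarrow> (real \<Rightarrow> real \<Rightarrow> real) \<Rightarrow> bool" where
  "l1_lipschitz L g \<longleftrightarrow>
     (\<forall>x1 x2 y1 y2. x1 \<in> {0..1} \<longrightarrow> x2 \<in> {0..1} \<longrightarrow> y1 \<in> {0..1} \<longrightarrow> y2 \<in> {0..1} \<longrightarrow>
        \<bar>g x1 x2 - g y1 y2\<bar> \<le> L * (\<bar>x1 - y1\<bar> + \<bar>x2 - y2\<bar>))"

text \<open>One step of the discrete-time dynamics of a single group with qualification profile
  p = pi_t(1|j) under policy tau(0;j) = tau0, tau(1;j) = tau1:
  beta_t(0;j) = tau0 * (1 - p), beta_t(1;j) = tau1 * p.\<close>
definition dyn_step :: "(real \<Rightarrow> real \<Rightarrow> real) \<Rightarrow> (real \<Rightarrow> real \<Rightarrow> real) \<Rightarrow> real \<Rightarrow> real \<Rightarrow> real \<Rightarrow> real" where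
  "dyn_step f0 f1 tau0 tau1 p =
     (let b0 = tau0 * (1 - p); b1 = tau1 * p in p * f1 b0 b1 + (1 - p) * f0 b0 b1)"

definition traj :: "(real \<Rightarrow> real \<Rightarrow> real) \<Rightarrow> (real \<Rightarrow> real \<Rightarrow> real) \<Rightarrow> real \<Rightarrow> real \<Rightarrow> real \<Rightarrow> nat \<Rightarrow> real" where
  "traj f0 f1 tau0 tau1 p0 t = ((dyn_step f0 f1 tau0 tau1) ^^ t) p0"

text \<open>Unconstrained policy: tau(1;j) = 1, tau(0;j) = 0 for both groups.\<close>
definition unconstrained_traj :: "(real \<Rightarrow> real \<Rightarrow> real) \<Rightarrow> (real \<Rightarrow> real \<Rightarrow> real) \<Rightarrow> real \<Rightarrow> nat \<Rightarrow> real" where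
  "unconstrained_traj f0 f1 p0 t = traj f0 f1 0 1 p0 t"

definition equalizing :: "(real \<Rightarrow> real \<Rightarrow> real) \<Rightarrow> (real \<Rightarrow> real \<Rightarrow> real) \<Rightarrow> real \<Rightarrow> real \<Rightarrow> bool" where
  "equalizing f0 f1 tau0 tau1 \<longleftrightarrow>
     (\<forall>pA pB. pA \<in> {0..1} \<longrightarrow> pB \<in> {0..1} \<longrightarrow>
        (\<lambda>t. \<bar>traj f0 f1 tau0 tau1 pA t - traj f0 f1 tau0 tau1 pB t\<bar>) \<longlonglongrightarrow> 0)"

end

theory Submission
  imports Defs
begin

text \<open>Under the unconstrained policy every group follows the same map
  \<open>f(\<pi>) = \<pi> f\<^sub>1(0,\<pi>) + (1-\<pi>) f\<^sub>0(0,\<pi>)\<close>. For \<open>y < x\<close> one writes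
  \<open>f x - f y = x (f\<^sub>1(0,x) - f\<^sub>1(0,y)) + (1-x) (f\<^sub>0(0,x) - f\<^sub>0(0,y)) + (x-y) (f\<^sub>1(0,y) - f\<^sub>0(0,y))\<close>,
  so the Lipschitz bounds of \<open>f\<^sub>0, f\<^sub>1\<close> and the term in the supremum (with \<open>\<pi> = x\<close>, \<open>\<Delta> = x - y\<close>)
  make \<open>f\<close> an \<open>L\<^sub>U\<^sub>N\<close>-contraction of \<open>[0,1]\<close>. Banach's fixed point theorem gives the unique
  fixed point, and the distance between the two groups shrinks by a factor \<open>L\<^sub>U\<^sub>N\<close> per step.\<close>

lemma funpow_image_subset:
  assumes "f ` S \<subseteq> S"
  shows "(f ^^ n) ` S \<subseteq> S"
  using assms by (induction n) auto

lemma funpow_lipschitz_on: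
  assumes "C-lipschitz_on S f" and "f ` S \<subseteq> S"
  shows "(C ^ n)-lipschitz_on S (f ^^ n)"
proof (induction n)
  case 0
  show ?case by (auto simp: lipschitz_on_def)
next
  case (Suc n)
  have "(C * C ^ n)-lipschitz_on S (f \<circ> (f ^^ n))"
    using Suc lipschitz_on_subset[OF assms(1) funpow_image_subset[OF assms(2)]]
    by (rule lipschitz_on_compose)
  then show ?case by (simp add: funpow_Suc_right[symmetric] funpow_swap1)
qed

lemma funpow_contraction_dist_tendsto:
  assumes "C-lipschitz_on S f" and "f ` S \<subseteq> S" and "C < 1" and "x \<in> S" and "y \<in> S"
  shows "(\<lambda>n. dist ((f ^^ n) x) ((f ^^ n) y)) \<longlonglongrightarrow> 0"
proof (rule Lim_null_comparison)
  have "0 \<le> C" using assms(1) by (rule lipschitz_on_nonneg)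
  then show "(\<lambda>n. C ^ n * dist x y) \<longlonglongrightarrow> 0"
    using \<open>C < 1\<close> by (intro tendsto_mult_left_zero LIMSEQ_power_zero) auto
  show "\<forall>\<^sub>F n in sequentially. norm (dist ((f ^^ n) x) ((f ^^ n) y)) \<le> C ^ n * dist x y"
    using lipschitz_onD[OF funpow_lipschitz_on[OF assms(1,2)]] assms(4,5) by simp
qed

lemma l1_lipschitz_nonneg:
  assumes "l1_lipschitz L g"
  shows "0 \<le> L"
  using assms[unfolded l1_lipschitz_def, rule_format, of 1 0 0 0]
  by (auto intro: order_trans[OF abs_ge_zero])

definition unconstrained_step :: "(real \<Rightarrow> real \<Rightarrow> real) \<Rightarrow> (real \<Rightarrow> real \<Rightarrow> real) \<Rightarrow> real \<Rightarrow> real"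
  where "unconstrained_step f0 f1 p = p * f1 0 p + (1 - p) * f0 0 p"

lemma dyn_step_unconstrained: "dyn_step f0 f1 0 1 = unconstrained_step f0 f1"
  by (auto simp: dyn_step_def unconstrained_step_def Let_def)

lemma traj_unconstrained: "traj f0 f1 0 1 p t = (unconstrained_step f0 f1 ^^ t) p"
  by (simp add: traj_def dyn_step_unconstrained)

lemma unconstrained_step_image_unit:
  assumes "\<And>y. y \<in> {0..1} \<Longrightarrow> f0 0 y \<in> {0..1}" and "\<And>y. y \<in> {0..1} \<Longrightarrow> f1 0 y \<in> {0..1}"
  shows "unconstrained_step f0 f1 ` {0..1} \<subseteq> {0..1}"
proof
  fix q assume "q \<in> unconstrained_step f0 f1 ` {0..1}"
  then obtain p where p: "p \<in> {0..1}" and q: "q = p * f1 0 p + (1 - p) * f0 0 p"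
    by (auto simp: unconstrained_step_def)
  have "f1 0 p \<in> {0..1}" "f0 0 p \<in> {0..1}" using p assms by auto
  then show "q \<in> {0..1}"
    using p convex_bound_le[of "f1 0 p" 1 "f0 0 p" p "1 - p"] by (auto simp: q)
qed

lemma unconstrained_step_increment_bound:
  assumes lip0: "l1_lipschitz L0 f0" and lip1: "l1_lipschitz L1 f1"
    and xy: "0 \<le> y" "y \<le> x" "x \<le> 1"
  shows "\<bar>unconstrained_step f0 f1 x - unconstrained_step f0 f1 y\<bar>
           \<le> (x - y) * (x * L1 + (1 - x) * L0 + \<bar>f1 0 y - f0 0 y\<bar>)"
proof -
  have d1: "\<bar>f1 0 x - f1 0 y\<bar> \<le> L1 * (x - y)"
    using lip1[unfolded l1_lipschitz_def, rule_format, of 0 x 0 y] xy by simp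
  have d0: "\<bar>f0 0 x - f0 0 y\<bar> \<le> L0 * (x - y)"
    using lip0[unfolded l1_lipschitz_def, rule_format, of 0 x 0 y] xy by simp
  have "unconstrained_step f0 f1 x - unconstrained_step f0 f1 y
      = x * (f1 0 x - f1 0 y) + (1 - x) * (f0 0 x - f0 0 y) + (x - y) * (f1 0 y - f0 0 y)"
    by (simp add: unconstrained_step_def algebra_simps)
  also have "\<bar>\<dots>\<bar> \<le> x * \<bar>f1 0 x - f1 0 y\<bar> + (1 - x) * \<bar>f0 0 x - f0 0 y\<bar>
                      + (x - y) * \<bar>f1 0 y - f0 0 y\<bar>"
    using xy by (auto simp: abs_mult intro!: abs_triangle_ineq[THEN order_trans] add_mono)
  also have "\<dots> \<le> x * (L1 * (x - y)) + (1 - x) * (L0 * (x - y)) + (x - y) * \<bar>f1 0 y - f0 0 y\<bar>"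
    using xy d0 d1 by (intro add_mono mult_left_mono) auto
  also have "\<dots> = (x - y) * (x * L1 + (1 - x) * L0 + \<bar>f1 0 y - f0 0 y\<bar>)"
    by (simp add: algebra_simps)
  finally show ?thesis .
qed

lemma unconstrained_step_lipschitz_on:
  assumes lip0: "l1_lipschitz L0 f0" and lip1: "l1_lipschitz L1 f1"
    and bound: "\<And>pi D. 0 \<le> pi \<Longrightarrow> pi \<le> 1 \<Longrightarrow> 0 < D \<Longrightarrow> D \<le> pi \<Longrightarrow>
                  pi * L1 + (1 - pi) * L0 + \<bar>f1 0 (pi - D) - f0 0 (pi - D)\<bar> \<le> M"
  shows "M-lipschitz_on {0..1} (unconstrained_step f0 f1)"
proof (rule lipschitz_on_leI)
  have "L1 + \<bar>f1 0 0 - f0 0 0\<bar> \<le> M" using bound[of 1 1] by simp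
  then show "0 \<le> M" using l1_lipschitz_nonneg[OF lip1] abs_ge_zero[of "f1 0 0 - f0 0 0"] by linarith
  fix x y :: real assume "x \<in> {0..1}" "y \<in> {0..1}" "x \<le> y"
  show "dist (unconstrained_step f0 f1 x) (unconstrained_step f0 f1 y) \<le> M * dist x y"
  proof (cases "x = y")
    case False
    with \<open>x \<le> y\<close> have "y * L1 + (1 - y) * L0 + \<bar>f1 0 x - f0 0 x\<bar> \<le> M"
      using bound[of y "y - x"] \<open>x \<in> {0..1}\<close> \<open>y \<in> {0..1}\<close> by simp
    then have "(y - x) * (y * L1 + (1 - y) * L0 + \<bar>f1 0 x - f0 0 x\<bar>) \<le> (y - x) * M"
      using \<open>x \<le> y\<close> by (intro mult_left_mono) auto
    then show ?thesis
      using unconstrained_step_increment_bound[OF lip0 lip1, of x y] \<open>x \<in> {0..1}\<close> \<open>y \<in> {0..1}\<close> \<open>x \<le> y\<close>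
      by (simp add: dist_real_def abs_minus_commute mult.commute)
  qed simp
qed

lemma bdd_above_LUN_set:
  fixes f0 f1 :: "real \<Rightarrow> real \<Rightarrow> real" and L0 L1 :: real
  assumes "\<And>y. y \<in> {0..1} \<Longrightarrow> f0 0 y \<in> {0..1}" and "\<And>y. y \<in> {0..1} \<Longrightarrow> f1 0 y \<in> {0..1}"
  shows "bdd_above {pi * L1 + (1 - pi) * L0 + \<bar>f1 0 (pi - D) - f0 0 (pi - D)\<bar> | pi D.
                      0 \<le> pi \<and> pi \<le> 1 \<and> 0 < D \<and> D \<le> pi}"
proof (rule bdd_aboveI, safe)
  fix pi D :: real assume h: "0 \<le> pi" "pi \<le> 1" "0 < D" "D \<le> pi"
  then have "f1 0 (pi - D) \<in> {0..1}" "f0 0 (pi - D) \<in> {0..1}" using assms by auto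
  then have "\<bar>f1 0 (pi - D) - f0 0 (pi - D)\<bar> \<le> 1" by auto
  moreover have "pi * L1 \<le> \<bar>L1\<bar>" "(1 - pi) * L0 \<le> \<bar>L0\<bar>"
    using h mult_left_le_one_le[of "\<bar>L1\<bar>" pi] mult_left_le_one_le[of "\<bar>L0\<bar>" "1 - pi"]
          mult_left_mono[OF abs_ge_self, of pi L1] mult_left_mono[OF abs_ge_self, of "1 - pi" L0]
    by linarith+
  ultimately show "pi * L1 + (1 - pi) * L0 + \<bar>f1 0 (pi - D) - f0 0 (pi - D)\<bar> \<le> \<bar>L1\<bar> + \<bar>L0\<bar> + 1"
    by linarith
qed

theorem mainTheorem2:
  fixes f0 f1 :: "real \<Rightarrow> real \<Rightarrow> real" and L0 L1 :: real
  assumes range0: "\<And>x y. x \<in> {0..1} \<Longrightarrow> y \<in> {0..1} \<Longrightarrow> f0 x y \<in> {0..1}"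
    and range1: "\<And>x y. x \<in> {0..1} \<Longrightarrow> y \<in> {0..1} \<Longrightarrow> f1 x y \<in> {0..1}"
    and C1_0: "C1_on_square f0" and C1_1: "C1_on_square f1"
    and lip0: "l1_lipschitz L0 f0" and lip1: "l1_lipschitz L1 f1"
    and LUN_def: "LUN = Sup {pi * L1 + (1 - pi) * L0 + \<bar>f1 0 (pi - D) - f0 0 (pi - D)\<bar> | pi D.
                               0 \<le> pi \<and> pi \<le> 1 \<and> 0 < D \<and> D \<le> pi}"
    and f_def: "f = (\<lambda>pi. pi * f1 0 pi + (1 - pi) * f0 0 pi)"
    and LUN_lt: "LUN < 1"
  shows "(\<forall>x\<in>{0..1}. \<forall>y\<in>{0..1}. \<bar>f x - f y\<bar> \<le> LUN * \<bar>x - y\<bar>)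
       \<and> (\<exists>!pe. pe \<in> {0..1} \<and> f pe = pe)
       \<and> equalizing f0 f1 0 1
       \<and> (\<forall>pe pA pB d. pe \<in> {0..1} \<and> f pe = pe \<longrightarrow> pA \<in> {0..1} \<longrightarrow> pB \<in> {0..1} \<longrightarrow>
            max \<bar>pA - pe\<bar> \<bar>pB - pe\<bar> \<le> d \<longrightarrow>
            (\<forall>t. \<bar>unconstrained_traj f0 f1 pA t - unconstrained_traj f0 f1 pB t\<bar> \<le> 2 * d * LUN ^ t))"
proof -
  have f: "f = unconstrained_step f0 f1" by (simp add: f_def unconstrained_step_def fun_eq_iff)
  have maps: "f ` {0..1} \<subseteq> {0..1}"
    unfolding f using range0 range1 by (intro unconstrained_step_image_unit) auto
  have "LUN-lipschitz_on {0..1} f"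
    unfolding f using lip0 lip1
  proof (rule unconstrained_step_lipschitz_on)
    show "pi * L1 + (1 - pi) * L0 + \<bar>f1 0 (pi - D) - f0 0 (pi - D)\<bar> \<le> LUN"
      if "0 \<le> pi" "pi \<le> 1" "0 < D" "D \<le> pi" for pi D
      unfolding LUN_def
      by (rule cSup_upper) (use that in blast, use range0 range1 in \<open>auto intro: bdd_above_LUN_set\<close>)
  qed
  then have contraction: "LUN-lipschitz_on {0..1} f" and "0 \<le> LUN"
    by (auto dest: lipschitz_on_nonneg)
  have traj_dist: "\<bar>traj f0 f1 0 1 a t - traj f0 f1 0 1 b t\<bar> \<le> LUN ^ t * \<bar>a - b\<bar>"
    if "a \<in> {0..1}" "b \<in> {0..1}" for a b t
    using lipschitz_onD[OF funpow_lipschitz_on[OF contraction maps] that]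
    by (simp add: traj_unconstrained f dist_real_def)
  have "\<exists>!pe\<in>{0..1}. f pe = pe"
    using contraction maps \<open>0 \<le> LUN\<close> LUN_lt
    by (intro Banach_fix) (auto simp: complete_eq_closed lipschitz_on_def)
  moreover have "equalizing f0 f1 0 1"
    unfolding equalizing_def
    using funpow_contraction_dist_tendsto[OF contraction maps LUN_lt]
    by (simp add: traj_unconstrained f dist_real_def)
  moreover have "\<bar>unconstrained_traj f0 f1 pA t - unconstrained_traj f0 f1 pB t\<bar> \<le> 2 * d * LUN ^ t"
    if "pA \<in> {0..1}" "pB \<in> {0..1}" "max \<bar>pA - pe\<bar> \<bar>pB - pe\<bar> \<le> d" for pe pA pB d t
  proof -
    have "LUN ^ t * \<bar>pA - pB\<bar> \<le> LUN ^ t * (2 * d)"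
      using that(3) \<open>0 \<le> LUN\<close> by (intro mult_left_mono) auto
    then show ?thesis
      using traj_dist[OF that(1,2), of t] by (simp add: unconstrained_traj_def mult.commute)
  qed
  ultimately show ?thesis
    using contraction by (auto simp: lipschitz_on_def dist_real_def)
qed

end
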